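(* Let $\mathbb{A}$ be an epistemic Heyting algebra and $a\in\mathbb{A}$. If $[b]\in\mathsf{Min}_i(\mathbb{A}^a)$, then $\lozenge_i(b\wedge a)$ is the unique $i$-minimal element of $\mathbb{A}$ which belongs to $[b]$.
   Context: Fix a set $\mathsf{Ag}$ of agents. A monadic Heyting algebra is a Heyting algebra $\mathbb{L}$ with, for each $i\in\mathsf{Ag}$, monotone unary operations $\lozenge_i,\Box_i$ such that for all $a,b$: $a\leq\lozenge_i a$; $\Box_i a\leq a$; $\lozenge_i(a\vee b)\leq\lozenge_i a\vee\lozenge_i b$; $\Box_i(a\to b)\leq\Box_i a\to\Box_i b$; $\lozenge_i a\leq\Box_i\lozenge_i a$; $\lozenge_i\Box_i a\leq\Box_i a$; $\Box_i(a\to b)\leq\lozenge_i a\to\lozenge_i b$; $\lozenge_i\bot\leq\bot$; $\top\leq\Box_i\top$. An epistemic Heyting algebra is a finite monadic Heyting algebra with $\lozenge_i a\vee\neg\lozenge_i a=\top$ for all $i,a$. An element $c$ is $i$-minimal if $c\neq\bot$, $\lozenge_i c=c$, and whenever $d<c$ and $\lozenge_i d=d$ then $d=\bot$; $\mathsf{Min}_i(\cdot)$ is the set of $i$-minimal elements. The pseudo-quotient algebra $\mathbb{A}^a$: $b\cong_a c$ iff $b\wedge a=c\wedge a$; carrier the quotient Heyting algebra $\mathbb{L}/{\cong_a}$ with classes $[c]$ ($[b]\leq[c]$ iff $b\wedge a\leq c\wedge a$); $\lozenge^a_i[b]=[\lozenge_i(b\wedge a)]$, $\Box^a_i[b]=[\Box_i(a\to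 b)]$; $i$-minimality in $\mathbb{A}^a$ is w.r.t. $\lozenge^a_i$. *)

theory Defs
  imports Main
begin

text \<open>A Heyting algebra: a bounded lattice (carrier = the type) with a relative
pseudo-complement imp.  Distributivity follows from the residuation law.\<close>
locale heyting_algebra =
  fixes imp :: "'a::bounded_lattice \<Rightarrow> 'a \<Rightarrow> 'a"
  assumes residuation: "\<And>x y z. inf x y \<le> z \<longleftrightarrow> x \<le> imp y z"

locale monadic_heyting_algebra = heyting_algebra imp
  for imp :: "'a::bounded_lattice \<Rightarrow> 'a \<Rightarrow> 'a" +
  fixes dia :: "'i \<Rightarrow> 'a \<Rightarrow> 'a"
    and box :: "'i \<Rightarrow> 'a \<Rightarrow> 'a"
  assumes dia_mono: "\<And>i. mono (dia i)"
    and box_mono: "\<And>i. mono (box i)"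
    and dia_infl: "\<And>i a. a \<le> dia i a"
    and box_defl: "\<And>i a. box i a \<le> a"
    and dia_sup: "\<And>i a b. dia i (sup a b) \<le> sup (dia i a) (dia i b)"
    and box_K: "\<And>i a b. box i (imp a b) \<le> imp (box i a) (box i b)"
    and dia_box_dia: "\<And>i a. dia i a \<le> box i (dia i a)"
    and dia_box: "\<And>i a. dia i (box i a) \<le> box i a"
    and box_imp_dia: "\<And>i a b. box i (imp a b) \<le> imp (dia i a) (dia i b)"
    and dia_bot: "\<And>i. dia i bot \<le> bot"
    and box_top: "\<And>i. top \<le> box i top"

locale epistemic_heyting_algebra = monadic_heyting_algebra imp dia box
  for imp :: "'a::{bounded_lattice,finite} \<Rightarrow> 'a \<Rightarrow> 'a"
  and dia :: "'i \<Rightarrow> 'a \<Rightarrow> 'a" and box :: "'i \<Rightarrow> 'a \<Rightarrow> 'a" +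
  assumes dia_excluded_middle: "\<And>i a. sup (dia i a) (imp (dia i a) bot) = top"

definition i_minimal :: "('i \<Rightarrow> 'a::bounded_lattice \<Rightarrow> 'a) \<Rightarrow> 'i \<Rightarrow> 'a \<Rightarrow> bool" where
  "i_minimal dia i c \<longleftrightarrow> c \<noteq> bot \<and> dia i c = c \<and>
     (\<forall>d. d < c \<and> dia i d = d \<longrightarrow> d = bot)"

text \<open>Pseudo-quotient A^a, described on representatives: b \<cong>_a c iff b \<and> a = c \<and> a;
 [b] \<le> [c] iff b \<and> a \<le> c \<and> a; dia^a [b] = [dia (b \<and> a)]; box^a [b] = [box (a \<rightarrow> b)].\<close>
definition pq_cong :: "'a::bounded_lattice \<Rightarrow> 'a \<Rightarrow> 'a \<Rightarrow> bool" where
  "pq_cong a b c \<longleftrightarrow> inf b a = inf c a"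

definition pq_le :: "'a::bounded_lattice \<Rightarrow> 'a \<Rightarrow> 'a \<Rightarrow> bool" where
  "pq_le a b c \<longleftrightarrow> inf b a \<le> inf c a"

definition pq_dia :: "('i \<Rightarrow> 'a::bounded_lattice \<Rightarrow> 'a) \<Rightarrow> 'a \<Rightarrow> 'i \<Rightarrow> 'a \<Rightarrow> 'a" where
  "pq_dia dia a i b = dia i (inf b a)"

definition pq_i_minimal :: "('i \<Rightarrow> 'a::bounded_lattice \<Rightarrow> 'a) \<Rightarrow> 'a \<Rightarrow> 'i \<Rightarrow> 'a \<Rightarrow> bool" where
  "pq_i_minimal dia a i b \<longleftrightarrow>
     \<not> pq_cong a b bot \<and> pq_cong a (pq_dia dia a i b) b \<and>
     (\<forall>d. pq_le a d b \<and> \<not> pq_cong a d b \<and> pq_cong a (pq_dia dia a i d) d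
          \<longrightarrow> pq_cong a d bot)"

end

theory Submission
  imports Defs
begin

text \<open>The pseudo-complement of a \<open>\<diamond>\<^sub>i\<close>-fixed element \<open>d\<close> is again \<open>\<diamond>\<^sub>i\<close>-closed, so
  \<open>\<diamond>\<^sub>i\<close> of anything disjoint from \<open>d\<close> stays disjoint from \<open>d\<close>. Hence if \<open>d < \<diamond>\<^sub>i(b \<and> a)\<close>
  is fixed, either \<open>d \<and> a = b \<and> a\<close> (and then \<open>\<diamond>\<^sub>i(b \<and> a) \<le> d\<close>, impossible), or \<open>d \<and> a = \<bottom>\<close>
  by minimality of \<open>[b]\<close>, and then \<open>d\<close> is disjoint from \<open>\<diamond>\<^sub>i(b \<and> a) \<ge> d\<close>. Uniqueness holds
  because an \<open>i\<close>-minimal \<open>c\<close> contains \<open>\<diamond>\<^sub>i\<close> of each of its nonzero elements.\<close>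

context heyting_algebra
begin

lemma le_imp_bot_iff: "x \<le> imp d bot \<longleftrightarrow> inf x d = bot"
  using residuation[of x d bot] by (simp add: bot_unique)

lemma le_double_neg: "d \<le> imp (imp d bot) bot"
proof -
  have "inf (imp d bot) d = bot" by (simp add: le_imp_bot_iff[symmetric])
  then show ?thesis by (simp add: le_imp_bot_iff inf_commute)
qed

end

context monadic_heyting_algebra
begin

lemma dia_le_dia: "x \<le> y \<Longrightarrow> dia i x \<le> dia i y"
  using dia_mono monoD by blast

lemma box_le_box: "x \<le> y \<Longrightarrow> box i x \<le> box i y"
  using box_mono monoD by blast

lemma dia_idem: "dia i (dia i x) = dia i x"
proof (rule antisym)
  have "dia i (dia i x) \<le> dia i (box i (dia i x))"
    by (rule dia_le_dia[OF dia_box_dia])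
  also have "\<dots> \<le> box i (dia i x)" by (rule dia_box)
  also have "\<dots> \<le> dia i x" by (rule box_defl)
  finally show "dia i (dia i x) \<le> dia i x" .
qed (rule dia_infl)

lemma box_eq_if_dia_eq: "dia i d = d \<Longrightarrow> box i d = d"
  using dia_box_dia[of i d] box_defl[of i d] by simp

lemma dia_neg_le_neg_if_dia_eq:
  assumes "dia i d = d"
  shows "dia i (imp d bot) \<le> imp d bot"
proof -
  have "d = box i d" using box_eq_if_dia_eq[OF assms] by simp
  also have "\<dots> \<le> box i (imp (imp d bot) bot)" by (rule box_le_box[OF le_double_neg])
  also have "\<dots> \<le> imp (dia i (imp d bot)) (dia i bot)" by (rule box_imp_dia)
  finally have "inf d (dia i (imp d bot)) \<le> dia i bot" using residuation by blast
  also have "\<dots> \<le> bot" by (rule dia_bot)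
  finally show ?thesis by (simp add: le_imp_bot_iff inf_commute bot_unique)
qed

lemma inf_dia_eq_bot_if_dia_eq:
  assumes "dia i d = d" and "inf x d = bot"
  shows "inf (dia i x) d = bot"
proof -
  have "dia i x \<le> dia i (imp d bot)" using assms(2) by (simp add: dia_le_dia le_imp_bot_iff)
  also have "\<dots> \<le> imp d bot" by (rule dia_neg_le_neg_if_dia_eq[OF assms(1)])
  finally show ?thesis by (simp add: le_imp_bot_iff)
qed

lemma i_minimal_eq_dia:
  assumes "i_minimal dia i c" and "x \<le> c" and "x \<noteq> bot"
  shows "c = dia i x"
proof -
  from assms(1) have fixed: "dia i c = c" and minimal: "\<And>d. d < c \<Longrightarrow> dia i d = d \<Longrightarrow> d = bot"
    unfolding i_minimal_def by auto
  have "dia i x \<le> c" using dia_le_dia[OF assms(2), of i] fixed by simp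
  moreover have "dia i x \<noteq> bot" using dia_infl[of x i] assms(3) by (metis bot_unique)
  moreover have "dia i (dia i x) = dia i x" by (rule dia_idem)
  ultimately show ?thesis using minimal[of "dia i x"] by (metis order.not_eq_order_implies_strict)
qed

lemma i_minimal_dia_if_pq_i_minimal:
  assumes "pq_i_minimal dia a i b"
  shows "i_minimal dia i (dia i (inf b a))"
proof -
  define e where "e = dia i (inf b a)"
  from assms have nonzero: "inf b a \<noteq> bot" and cong: "inf e a = inf b a"
    and minimal: "\<And>d. inf d a \<le> inf b a \<Longrightarrow> inf d a \<noteq> inf b a \<Longrightarrow>
          inf (dia i (inf d a)) a = inf d a \<Longrightarrow> inf d a = bot"
    unfolding pq_i_minimal_def pq_cong_def pq_le_def pq_dia_def e_def by auto
  have "e \<noteq> bot" using dia_infl[of "inf b a" i] nonzero unfolding e_def by (metis bot_unique)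
  moreover have "dia i e = e" unfolding e_def by (rule dia_idem)
  moreover have "d = bot" if "d < e" and fixed: "dia i d = d" for d
  proof -
    have "inf d a \<le> inf b a" using \<open>d < e\<close> cong inf_mono[of d e a a] by simp
    moreover have "inf d a \<noteq> inf b a"
    proof
      assume "inf d a = inf b a"
      then have "inf b a \<le> d" by (metis inf_le1)
      then have "e \<le> dia i d" unfolding e_def by (rule dia_le_dia)
      then have "e \<le> d" using fixed by simp
      with \<open>d < e\<close> show False by simp
    qed
    moreover have "inf (dia i (inf d a)) a = inf d a"
    proof (rule antisym)
      show "inf (dia i (inf d a)) a \<le> inf d a"
        using dia_le_dia[of "inf d a" d i] fixed by (simp add: le_infI1)
      show "inf d a \<le> inf (dia i (inf d a)) a" by (simp add: dia_infl)
    qed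
    ultimately have "inf d a = bot" by (rule minimal)
    then have "inf (inf b a) d = bot"
      using inf_mono[of "inf b a" a d d] by (simp add: inf_commute bot_unique)
    then have "inf e d = bot" unfolding e_def by (rule inf_dia_eq_bot_if_dia_eq[OF fixed])
    with \<open>d < e\<close> show "d = bot" by (simp add: inf_absorb2 less_imp_le)
  qed
  ultimately show ?thesis unfolding i_minimal_def e_def by blast
qed

end

theorem lemma5:
  fixes imp :: "'a::{bounded_lattice,finite} \<Rightarrow> 'a \<Rightarrow> 'a"
    and dia box :: "'i \<Rightarrow> 'a \<Rightarrow> 'a"
    and a b :: 'a and i :: 'i
  assumes "epistemic_heyting_algebra imp dia box"
    and "pq_i_minimal dia a i b"
  shows "i_minimal dia i (dia i (inf b a)) \<and> pq_cong a (dia i (inf b a)) b \<and>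
         (\<forall>c. i_minimal dia i c \<and> pq_cong a c b \<longrightarrow> c = dia i (inf b a))"
proof -
  interpret epistemic_heyting_algebra imp dia box by fact
  have "pq_cong a (dia i (inf b a)) b"
    using assms(2) unfolding pq_i_minimal_def pq_dia_def by blast
  moreover have "c = dia i (inf b a)" if "i_minimal dia i c" and "pq_cong a c b" for c
  proof (rule i_minimal_eq_dia[OF \<open>i_minimal dia i c\<close>])
    show "inf b a \<le> c" using \<open>pq_cong a c b\<close> unfolding pq_cong_def by (metis inf_le1)
    show "inf b a \<noteq> bot" using assms(2) unfolding pq_i_minimal_def pq_cong_def by simp
  qed
  ultimately show ?thesis using i_minimal_dia_if_pq_i_minimal[OF assms(2)] by blast
qed

end
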